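(* Let $B\in\mathbb{R}^{n\times n}$ be symmetric, $b\in\mathbb{R}^n$, $d\in\mathbb{R}$, $h(x)=x^TBx+2b^Tx+d$, and let $\alpha\le\beta$ be real numbers. Then there exists $\overline{x}\in\mathbb{R}^n$ with $\alpha<h(\overline{x})<\beta$ if and only if there exist $\widehat{x}\in\mathbb{R}^n$ and a symmetric matrix $\widehat{X}\in\mathbb{R}^{n\times n}$ with $\widehat{X}-\widehat{x}\widehat{x}^T$ positive definite such that $\alpha< B\bullet\widehat{X}+2b^T\widehat{x}+d<\beta$.
   Context: For matrices $M,N\in\mathbb{R}^{n\times n}$, $M\bullet N=\sum_{i,j}m_{ij}n_{ij}$. *)

theory Defs
  imports "HOL-Analysis.Analysis"
begin

definition frob_inner :: "real^'n^'n \<Rightarrow> real^'n^'n \<Rightarrow> real" where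
  "frob_inner M N = (\<Sum>i\<in>UNIV. \<Sum>j\<in>UNIV. M $ i $ j * N $ i $ j)"

definition sym_mat :: "real^'n^'n \<Rightarrow> bool" where
  "sym_mat A \<longleftrightarrow> transpose A = A"

definition pos_def_mat :: "real^'n^'n \<Rightarrow> bool" where
  "pos_def_mat A \<longleftrightarrow> sym_mat A \<and> (\<forall>x. x \<noteq> 0 \<longrightarrow> x \<bullet> (A *v x) > 0)"

definition outer :: "real^'n \<Rightarrow> real^'n \<Rightarrow> real^'n^'n" where
  "outer x y = (\<chi> i j. x $ i * y $ j)"

end

theory Submission
  imports Defs "HOL-Real_Asymp.Real_Asymp"
begin

text \<open>A point \<open>x\<close> with \<open>\<alpha> < h x < \<beta>\<close> lifts to \<open>(x, x x\<^sup>T + \<epsilon> I)\<close>, whose value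
  \<open>h x + \<epsilon> tr B\<close> stays in the interval for small \<open>\<epsilon> > 0\<close>.
  Conversely, the lifted value is \<open>h x + B \<bullet> P\<close> with \<open>P = X - x x\<^sup>T\<close> positive definite.
  If \<open>h\<close> missed the interval then, \<open>\<real>\<^sup>n\<close> being connected, \<open>h \<le> \<alpha>\<close> everywhere
  or \<open>h \<ge> \<beta>\<close> everywhere. A quadratic bounded above has \<open>B\<close> negative semidefinite,
  and then \<open>B \<bullet> P \<le> 0\<close>, so the lifted value would be at most \<open>\<alpha>\<close>; symmetrically for \<open>\<beta>\<close>.
  The sign of \<open>A \<bullet> P\<close> for \<open>A\<close> semidefinite and \<open>P\<close> definite follows by induction on the
  dimension: \<open>P\<close> is the rank-one matrix \<open>P\<^sub>i\<^sub>k P\<^sub>j\<^sub>k / P\<^sub>k\<^sub>k\<close>, which pairs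
  nonnegatively with \<open>A\<close>, plus its Schur complement, which is positive definite on the
  remaining coordinates.\<close>

text \<open>Matrices are taken as functions on a finite index set, so that the Schur complement
  argument can induct on that set.\<close>

definition quad_form :: "'a set \<Rightarrow> ('a \<Rightarrow> 'a \<Rightarrow> real) \<Rightarrow> ('a \<Rightarrow> real) \<Rightarrow> real" where
  "quad_form S P v = (\<Sum>i\<in>S. \<Sum>j\<in>S. v i * P i j * v j)"

definition psd_on :: "'a set \<Rightarrow> ('a \<Rightarrow> 'a \<Rightarrow> real) \<Rightarrow> bool" where
  "psd_on S A \<longleftrightarrow> (\<forall>v. 0 \<le> quad_form S A v)"

definition pd_on :: "'a set \<Rightarrow> ('a \<Rightarrow> 'a \<Rightarrow> real) \<Rightarrow> bool" where
  "pd_on S P \<longleftrightarrow> (\<forall>v. (\<exists>i\<in>S. v i \<noteq> 0) \<longrightarrow> 0 < quad_form S P v)"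

definition schur_compl :: "('a \<Rightarrow> 'a \<Rightarrow> real) \<Rightarrow> 'a \<Rightarrow> 'a \<Rightarrow> 'a \<Rightarrow> real" where
  "schur_compl P k i j = P i j - P i k * P j k / P k k"

lemma quad_form_insert:
  assumes "finite S" "k \<notin> S"
  shows "quad_form (insert k S) P v = v k * P k k * v k + (\<Sum>j\<in>S. v k * P k j * v j)
     + (\<Sum>i\<in>S. v i * P i k * v k) + quad_form S P v"
  using assms by (simp add: quad_form_def sum.distrib algebra_simps)

lemma quad_form_cong: "(\<And>i. i \<in> S \<Longrightarrow> v i = w i) \<Longrightarrow> quad_form S P v = quad_form S P w"
  unfolding quad_form_def by (auto intro!: sum.cong)

lemma psd_on_insertD:
  assumes "psd_on (insert k S) A" "finite S" "k \<notin> S"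
  shows "psd_on S A"
  unfolding psd_on_def
proof
  fix v
  have "quad_form (insert k S) A (v(k := 0)) = quad_form S A v"
    using assms(2,3) by (simp add: quad_form_insert) (auto intro: quad_form_cong)
  then show "0 \<le> quad_form S A v"
    using assms(1) unfolding psd_on_def by metis
qed

lemma pd_on_diag_pos:
  assumes "pd_on S P" "finite S" "k \<in> S"
  shows "0 < P k k"
proof -
  have "quad_form S P (\<lambda>i. of_bool (i = k)) = P k k"
    using assms(2,3) unfolding quad_form_def by (simp add: sum.remove[of S k] sum.neutral)
  moreover have "\<exists>i\<in>S. of_bool (i = k) \<noteq> (0::real)"
    using assms(3) by auto
  ultimately show ?thesis
    using assms(1) unfolding pd_on_def by (metis (no_types, lifting))
qed

text \<open>Eliminating the variable \<open>v k\<close> optimally turns the quadratic form of \<open>P\<close>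
  into that of its Schur complement.\<close>
lemma quad_form_schur_compl:
  fixes v :: "'a \<Rightarrow> real"
  assumes "finite S" "k \<notin> S" "\<And>i j. P i j = P j i" "P k k \<noteq> 0"
  defines "s \<equiv> \<Sum>i\<in>S. v i * P i k"
  shows "quad_form (insert k S) P (v(k := - s / P k k)) = quad_form S (schur_compl P k) v"
proof -
  define c where "c = - s / P k k"
  let ?w = "v(k := c)"
  have w: "?w i = v i" if "i \<in> S" for i
    using that assms(2) by auto
  have row: "(\<Sum>j\<in>S. P k j * v j) = s"
    unfolding s_def using assms(3) by (auto intro!: sum.cong)
  have col: "(\<Sum>i\<in>S. ?w i * P i k * ?w k) = s * c"
    using w by (simp add: s_def sum_distrib_right)
  have "(\<Sum>j\<in>S. ?w k * P k j * ?w j) = c * s"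
    using w by (simp add: row[symmetric] sum_distrib_left mult.assoc)
  then have "quad_form (insert k S) P ?w = s * s / P k k - 2 * (s * s / P k k) + quad_form S P v"
    using assms(1,2,4) w col quad_form_cong[of S ?w v]
    by (simp add: quad_form_insert c_def)
  also have "\<dots> = quad_form S P v - (\<Sum>i\<in>S. \<Sum>j\<in>S. (v i * P i k) * (v j * P j k)) / P k k"
    by (simp add: s_def sum_product)
  also have "\<dots> = quad_form S (schur_compl P k) v"
    by (simp add: quad_form_def schur_compl_def sum_subtractf sum_divide_distrib algebra_simps)
  finally show ?thesis
    by (simp add: c_def)
qed

lemma pd_on_schur_compl:
  assumes "pd_on (insert k S) P" "finite S" "k \<notin> S" "\<And>i j. P i j = P j i"
  shows "pd_on S (schur_compl P k)"
  unfolding pd_on_def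
proof (intro allI impI)
  fix v :: "'a \<Rightarrow> real"
  assume "\<exists>i\<in>S. v i \<noteq> 0"
  then have "\<exists>i\<in>insert k S. (v(k := - (\<Sum>i\<in>S. v i * P i k) / P k k)) i \<noteq> 0"
    using assms(3) by auto
  then have "0 < quad_form (insert k S) P (v(k := - (\<Sum>i\<in>S. v i * P i k) / P k k))"
    using assms(1) unfolding pd_on_def by blast
  moreover have "0 < P k k"
    using pd_on_diag_pos[of "insert k S" P k] assms(1,2) by simp
  ultimately show "0 < quad_form S (schur_compl P k) v"
    using quad_form_schur_compl[where P = P, OF assms(2,3,4)] by simp
qed

lemma schur_compl_vanishes:
  assumes "\<And>i j. P i j = P j i" "P k k \<noteq> 0"
  shows "schur_compl P k k j = 0" "schur_compl P k i k = 0"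
  using assms by (simp_all add: schur_compl_def)

lemma sum_mult_schur_compl:
  "(\<Sum>i\<in>T. \<Sum>j\<in>T. A i j * P i j)
     = (\<Sum>i\<in>T. \<Sum>j\<in>T. A i j * schur_compl P k i j) + quad_form T A (\<lambda>i. P i k) / P k k"
  unfolding quad_form_def schur_compl_def
  by (simp add: sum_divide_distrib sum.distrib[symmetric] algebra_simps)

lemma psd_pd_sum_mult_nonneg:
  assumes "finite S" "psd_on S A" "pd_on S P" "\<And>i j. P i j = P j i"
  shows "0 \<le> (\<Sum>i\<in>S. \<Sum>j\<in>S. A i j * P i j)"
  using assms
proof (induction S arbitrary: P rule: finite_induct)
  case empty
  then show ?case by simp
next
  case (insert k S)
  have pos: "0 < P k k"
    using pd_on_diag_pos[of "insert k S" P k] insert.prems(2) insert.hyps(1) by simp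
  have "0 \<le> (\<Sum>i\<in>S. \<Sum>j\<in>S. A i j * schur_compl P k i j)"
  proof (rule insert.IH)
    show "psd_on S A"
      by (rule psd_on_insertD[OF insert.prems(1) insert.hyps])
    show "pd_on S (schur_compl P k)"
      by (rule pd_on_schur_compl[where P = P, OF insert.prems(2) insert.hyps insert.prems(3)])
    show "schur_compl P k i j = schur_compl P k j i" for i j
      using insert.prems(3) by (simp add: schur_compl_def)
  qed
  moreover have "(\<Sum>i\<in>insert k S. \<Sum>j\<in>insert k S. A i j * schur_compl P k i j)
      = (\<Sum>i\<in>S. \<Sum>j\<in>S. A i j * schur_compl P k i j)"
    using insert.hyps pos schur_compl_vanishes[where P = P and k = k, OF insert.prems(3)] by simp
  moreover have "0 \<le> quad_form (insert k S) A (\<lambda>i. P i k) / P k k"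
    using insert.prems(1) pos unfolding psd_on_def by simp
  ultimately show ?case
    using sum_mult_schur_compl[where T = "insert k S" and A = A and P = P and k = k] by linarith
qed

lemma inner_matrix_vector_eq_sum:
  "(x::real^'n) \<bullet> (M *v y) = (\<Sum>i\<in>UNIV. \<Sum>j\<in>UNIV. x$i * M$i$j * y$j)"
  by (simp add: inner_vec_def matrix_vector_mult_def sum_distrib_left mult.assoc)

lemma sym_mat_entry:
  assumes "sym_mat P"
  shows "P$i$j = P$j$i"
proof -
  have "transpose P $ j $ i = P $ j $ i"
    using assms unfolding sym_mat_def by simp
  then show ?thesis
    by (simp add: transpose_def)
qed

lemma frob_inner_nonneg:
  fixes A P :: "real^'n^'n"
  assumes "\<And>v. 0 \<le> v \<bullet> (A *v v)" "pos_def_mat P"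
  shows "0 \<le> frob_inner A P"
proof -
  have vec: "quad_form UNIV (\<lambda>i j. M$i$j) v = (\<chi> i. v i) \<bullet> (M *v (\<chi> i. v i))"
    for M :: "real^'n^'n" and v
    by (simp add: quad_form_def inner_matrix_vector_eq_sum)
  have "psd_on UNIV (\<lambda>i j. A$i$j)"
    using assms(1) vec unfolding psd_on_def by simp
  moreover have "pd_on UNIV (\<lambda>i j. P$i$j)"
    unfolding pd_on_def
  proof (intro allI impI)
    fix v :: "'n \<Rightarrow> real"
    assume "\<exists>i\<in>UNIV. v i \<noteq> 0"
    then have "(\<chi> i. v i) \<noteq> 0"
      by (metis vec_lambda_beta zero_index)
    then show "0 < quad_form UNIV (\<lambda>i j. P$i$j) v"
      using assms(2) vec unfolding pos_def_mat_def by simp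
  qed
  moreover have "\<And>i j. P$i$j = P$j$i"
    using assms(2) sym_mat_entry unfolding pos_def_mat_def by blast
  ultimately show ?thesis
    unfolding frob_inner_def
    using psd_pd_sum_mult_nonneg[of UNIV "\<lambda>i j. A$i$j" "\<lambda>i j. P$i$j"] by simp
qed

lemma frob_inner_add_right: "frob_inner B (X + Y) = frob_inner B X + frob_inner B Y"
  by (simp add: frob_inner_def sum.distrib distrib_left)

lemma frob_inner_scaleR_right: "frob_inner B (e *\<^sub>R X) = e * frob_inner B X"
  by (simp add: frob_inner_def sum_distrib_left algebra_simps)

lemma frob_inner_uminus_left: "frob_inner (- B) X = - frob_inner B X"
  by (simp add: frob_inner_def sum_negf)

lemma frob_inner_outer_self: "frob_inner B (outer x x) = x \<bullet> (B *v x)"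
  by (simp add: frob_inner_def outer_def inner_matrix_vector_eq_sum algebra_simps)

lemma pos_def_mat_scaleR_mat_1:
  assumes "0 < e"
  shows "pos_def_mat (e *\<^sub>R mat 1 :: real^'n^'n)"
  unfolding pos_def_mat_def
proof
  show "sym_mat (e *\<^sub>R mat 1 :: real^'n^'n)"
    by (simp add: sym_mat_def transpose_scalar)
  have "(e *\<^sub>R mat 1) *v v = e *\<^sub>R v" for v :: "real^'n"
    by (metis scaleR_matrix_vector_assoc matrix_vector_mul_lid)
  then show "\<forall>v::real^'n. v \<noteq> 0 \<longrightarrow> 0 < v \<bullet> ((e *\<^sub>R mat 1) *v v)"
    using assms by simp
qed

lemma leading_coeff_nonneg_if_bounded_below:
  fixes a b c M :: real
  assumes "\<And>t. M \<le> a * t\<^sup>2 + b * t + c"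
  shows "0 \<le> a"
proof (rule ccontr)
  assume "\<not> 0 \<le> a"
  then have "a < 0"
    by simp
  then have "filterlim (\<lambda>t. a * t\<^sup>2 + b * t + c) at_bot at_top"
    by real_asymp
  then have "\<forall>\<^sub>F t in at_top. a * t\<^sup>2 + b * t + c < M"
    by (simp add: filterlim_at_bot_dense)
  then obtain t where "a * t\<^sup>2 + b * t + c < M"
    using eventually_happens'[OF trivial_limit_at_top_linorder] by blast
  with assms show False
    by (metis not_le)
qed

lemma matrix_vector_mult_uminus_left: "(- A) *v x = - (A *v x :: real^'m)"
  by (simp add: matrix_vector_mult_def vec_eq_iff sum_negf)

lemma psd_if_quadratic_bounded_below:
  fixes B :: "real^'n^'n"
  assumes "\<And>x. M \<le> x \<bullet> (B *v x) + 2 * (b \<bullet> x) + d"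
  shows "0 \<le> v \<bullet> (B *v v)"
proof (rule leading_coeff_nonneg_if_bounded_below)
  fix t
  show "M \<le> (v \<bullet> (B *v v)) * t\<^sup>2 + (2 * (b \<bullet> v)) * t + d"
    using assms[of "t *\<^sub>R v"]
    by (simp add: power2_eq_square algebra_simps)
qed

lemma continuous_range_avoiding_interval:
  fixes f :: "'a::real_normed_vector \<Rightarrow> real"
  assumes "continuous_on UNIV f" "\<alpha> < \<beta>" "\<And>x. \<not> (\<alpha> < f x \<and> f x < \<beta>)"
  shows "(\<forall>x. f x \<le> \<alpha>) \<or> (\<forall>x. \<beta> \<le> f x)"
proof (rule ccontr)
  assume "\<not> ?thesis"
  then obtain p q where "\<alpha> < f p" "f q < \<beta>"
    by (auto simp: not_le)
  then have "f q \<le> (\<alpha> + \<beta>) / 2" "(\<alpha> + \<beta>) / 2 \<le> f p"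
    using assms(2) assms(3)[of p] assms(3)[of q] by auto
  moreover have "connected (range f)"
    using assms(1) connected_UNIV connected_continuous_image by blast
  ultimately have "(\<alpha> + \<beta>) / 2 \<in> range f"
    using connectedD_interval[of "range f" "f q" "f p"] by simp
  then obtain x where "f x = (\<alpha> + \<beta>) / 2"
    by (metis imageE)
  with assms(2) assms(3)[of x] show False
    by auto
qed

lemma exists_pos_perturbation_in_interval:
  fixes y T :: real
  assumes "\<alpha> < y" "y < \<beta>"
  shows "\<exists>e>0. \<alpha> < y + e * T \<and> y + e * T < \<beta>"
proof -
  have "((\<lambda>e. y + e * T) \<longlongrightarrow> y) (at_right 0)"
    by (intro tendsto_eq_intros) auto
  then have "\<forall>\<^sub>F e in at_right 0. \<alpha> < y + e * T \<and> y + e * T < \<beta>"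
    using assms by (intro eventually_conj order_tendstoD)
  then have "\<forall>\<^sub>F e in at_right 0. 0 < e \<and> \<alpha> < y + e * T \<and> y + e * T < \<beta>"
    using eventually_at_right_less by (rule eventually_conj[rotated])
  then show ?thesis
    using eventually_happens'[OF trivial_limit_at_right_real] by blast
qed

lemma frob_inner_nonneg_if_quadratic_bounded_below:
  fixes B P :: "real^'n^'n"
  assumes "\<And>y. M \<le> y \<bullet> (B *v y) + 2 * (b \<bullet> y) + d" "pos_def_mat P"
  shows "0 \<le> frob_inner B P"
  using psd_if_quadratic_bounded_below[OF assms(1)] assms(2) by (rule frob_inner_nonneg)

lemma lift_into_interval:
  fixes B :: "real^'n^'n"
  assumes "\<alpha> < x \<bullet> (B *v x) + 2 * (b \<bullet> x) + d" "x \<bullet> (B *v x) + 2 * (b \<bullet> x) + d < \<beta>"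
  shows "\<exists>X. sym_mat X \<and> pos_def_mat (X - outer x x) \<and>
           \<alpha> < frob_inner B X + 2 * (b \<bullet> x) + d \<and> frob_inner B X + 2 * (b \<bullet> x) + d < \<beta>"
proof -
  obtain e where "0 < e"
    and between: "\<alpha> < x \<bullet> (B *v x) + 2 * (b \<bullet> x) + d + e * frob_inner B (mat 1)"
      "x \<bullet> (B *v x) + 2 * (b \<bullet> x) + d + e * frob_inner B (mat 1) < \<beta>"
    using exists_pos_perturbation_in_interval[OF assms] by blast
  define X where "X = outer x x + e *\<^sub>R mat 1"
  have "sym_mat X"
    by (simp add: sym_mat_def X_def transpose_def outer_def mat_def vec_eq_iff)
  moreover have "pos_def_mat (X - outer x x)"
    using pos_def_mat_scaleR_mat_1[OF \<open>0 < e\<close>] by (simp add: X_def)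
  moreover have "frob_inner B X + 2 * (b \<bullet> x) + d
      = x \<bullet> (B *v x) + 2 * (b \<bullet> x) + d + e * frob_inner B (mat 1)"
    by (simp add: X_def frob_inner_add_right frob_inner_scaleR_right frob_inner_outer_self)
  ultimately show ?thesis
    using between by auto
qed

lemma exists_in_interval_if_lifted:
  fixes B P :: "real^'n^'n"
  assumes h: "\<And>y. h y = y \<bullet> (B *v y) + 2 * (b \<bullet> y) + d"
    and "pos_def_mat P" "\<alpha> < h x + frob_inner B P" "h x + frob_inner B P < \<beta>"
  shows "\<exists>y. \<alpha> < h y \<and> h y < \<beta>"
proof (rule ccontr)
  assume "\<nexists>y. \<alpha> < h y \<and> h y < \<beta>"
  moreover have "continuous_on UNIV h"
    unfolding h by (intro continuous_intros)
  moreover have "\<alpha> < \<beta>"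
    using assms(3,4) by linarith
  ultimately consider "\<forall>y. h y \<le> \<alpha>" | "\<forall>y. \<beta> \<le> h y"
    using continuous_range_avoiding_interval[of h \<alpha> \<beta>] by blast
  then show False
  proof cases
    case 1
    have "0 \<le> frob_inner (- B) P"
    proof (rule frob_inner_nonneg_if_quadratic_bounded_below[OF _ assms(2)])
      show "- \<alpha> \<le> y \<bullet> ((- B) *v y) + 2 * ((- b) \<bullet> y) + - d" for y
        using 1[rule_format, of y] by (simp add: h matrix_vector_mult_uminus_left)
    qed
    with assms(3) 1[rule_format, of x] show False
      by (simp add: frob_inner_uminus_left)
  next
    case 2
    have "0 \<le> frob_inner B P"
    proof (rule frob_inner_nonneg_if_quadratic_bounded_below[OF _ assms(2)])
      show "\<beta> \<le> y \<bullet> (B *v y) + 2 * (b \<bullet> y) + d" for y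
        using 2[rule_format, of y] by (simp add: h)
    qed
    with assms(4) 2[rule_format, of x] show False
      by simp
  qed
qed

theorem lemma1:
  fixes B :: "real^'n^'n" and b :: "real^'n" and d :: real
    and h :: "real^'n \<Rightarrow> real" and \<alpha> \<beta> :: real
  assumes "sym_mat B"
    and "\<And>x. h x = x \<bullet> (B *v x) + 2 * (b \<bullet> x) + d"
    and "\<alpha> \<le> \<beta>"
  shows "(\<exists>x. \<alpha> < h x \<and> h x < \<beta>) \<longleftrightarrow>
         (\<exists>x X. sym_mat X \<and> pos_def_mat (X - outer x x) \<and>
                 \<alpha> < frob_inner B X + 2 * (b \<bullet> x) + d \<and>
                 frob_inner B X + 2 * (b \<bullet> x) + d < \<beta>)"
proof
  assume "\<exists>x. \<alpha> < h x \<and> h x < \<beta>"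
  then show "\<exists>x X. sym_mat X \<and> pos_def_mat (X - outer x x) \<and>
      \<alpha> < frob_inner B X + 2 * (b \<bullet> x) + d \<and> frob_inner B X + 2 * (b \<bullet> x) + d < \<beta>"
    using lift_into_interval assms(2) by metis
next
  assume "\<exists>x X. sym_mat X \<and> pos_def_mat (X - outer x x) \<and>
      \<alpha> < frob_inner B X + 2 * (b \<bullet> x) + d \<and> frob_inner B X + 2 * (b \<bullet> x) + d < \<beta>"
  then obtain x X where pd: "pos_def_mat (X - outer x x)"
    and between: "\<alpha> < frob_inner B X + 2 * (b \<bullet> x) + d" "frob_inner B X + 2 * (b \<bullet> x) + d < \<beta>"
    by blast
  have "frob_inner B X = x \<bullet> (B *v x) + frob_inner B (X - outer x x)"
    using frob_inner_add_right[of B "X - outer x x" "outer x x"] by (simp add: frob_inner_outer_self)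
  with between show "\<exists>x. \<alpha> < h x \<and> h x < \<beta>"
    by (intro exists_in_interval_if_lifted[where x = x, OF assms(2) pd]) (simp_all add: assms(2))
qed

end
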